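(* Assume the standing assumptions in the context. Let $S\subsetneq S^*$ and $k=|S|$. Then $$\max_{i\in[d]\setminus S}|Z_i^S|\ \ge\ \sqrt{\frac{\rho^3}{L}}\,\frac{1}{\sqrt{s^*-k}}\,\|\beta^*-\beta^S\|_2\ \ge\ \sqrt{\frac{\rho^3}{L}}\,\frac{1}{\sqrt{s^*-k}}\,\|\beta^*_{S^*\setminus S}\|_2.$$
   Context: Standing assumptions: $(x,y)$ random with $x\in\mathbb{R}^d$, $y\in\mathbb{R}$; $\mathbb{E}[x]=0$; $y=\langle\beta^*,x\rangle+\epsilon$ with $\mathbb{E}[\epsilon\mid x]=0$; $S^*=\mathrm{supp}(\beta^* )$, $s^*=|S^*|$; $\Sigma$ the covariance of $x$, $\Sigma_F$ its principal submatrix on $F$; there are $0<\rho\le L$ with all eigenvalues of $\Sigma_F$ in $[\rho,L]$ for all $|F|=s^*$; for $|F|=s^*$, $\mu_F:=\max_{j\notin F}\|\Sigma_F^{-1}\mathrm{Cov}(x_F,x_j)\|_1<1$; $|y|<1$ and $\|x\|_\infty<M$ almost surely. $\mathcal{R}(\beta)=\mathbb{E}[(y-\langle x,\beta\rangle)^2]$, $\beta^S=\arg\min_{\mathrm{supp}(\beta)\subseteq S}\mathcal{R}(\beta)$, $Z_i^S=\mathbb{E}[x_i(y-\langle x,\beta^S\rangle)]$. For a vector $v$ and $F\subseteq[d]$, $v_F$ is its restriction to coordinates in $F$. *)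

theory Defs
  imports "HOL-Probability.Probability"
begin

text \<open>Vectors in R^d are modelled as functions nat => real, where only the
coordinates 0..d-1 are meaningful. The random vector x is X :: 'w => nat => real
on a probability space M, the response y is Y :: 'w => real.\<close>

definition supp :: "(nat \<Rightarrow> real) \<Rightarrow> nat set" where
  "supp v = {i. v i \<noteq> 0}"

definition inner_d :: "nat \<Rightarrow> (nat \<Rightarrow> real) \<Rightarrow> (nat \<Rightarrow> real) \<Rightarrow> real" where
  "inner_d d u v = (\<Sum>i<d. u i * v i)"

definition norm2_on :: "nat set \<Rightarrow> (nat \<Rightarrow> real) \<Rightarrow> real" where
  "norm2_on A v = sqrt (\<Sum>i\<in>A. (v i)\<^sup>2)"

definition gen_sigma :: "'w measure \<Rightarrow> nat \<Rightarrow> ('w \<Rightarrow> nat \<Rightarrow> real) \<Rightarrow> 'w measure" where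
  "gen_sigma M d X = sigma (space M)
     {{\<omega> \<in> space M. X \<omega> i \<in> B} | i B. i < d \<and> B \<in> sets borel}"

definition covx :: "'w measure \<Rightarrow> ('w \<Rightarrow> nat \<Rightarrow> real) \<Rightarrow> nat \<Rightarrow> nat \<Rightarrow> real" where
  "covx M X i j = (\<integral>\<omega>. (X \<omega> i - (\<integral>\<eta>. X \<eta> i \<partial>M)) * (X \<omega> j - (\<integral>\<eta>. X \<eta> j \<partial>M)) \<partial>M)"

definition sub_eigenvalue :: "(nat \<Rightarrow> nat \<Rightarrow> real) \<Rightarrow> nat set \<Rightarrow> real \<Rightarrow> bool" where
  "sub_eigenvalue Sig F mu \<longleftrightarrow>
     (\<exists>v. supp v \<subseteq> F \<and> v \<noteq> (\<lambda>_. 0) \<and> (\<forall>i\<in>F. (\<Sum>k\<in>F. Sig i k * v k) = mu * v i))"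

definition sub_solve :: "(nat \<Rightarrow> nat \<Rightarrow> real) \<Rightarrow> nat set \<Rightarrow> (nat \<Rightarrow> real) \<Rightarrow> (nat \<Rightarrow> real)" where
  "sub_solve Sig F c = (THE w. supp w \<subseteq> F \<and> (\<forall>i\<in>F. (\<Sum>k\<in>F. Sig i k * w k) = c i))"

definition mu_F :: "nat \<Rightarrow> (nat \<Rightarrow> nat \<Rightarrow> real) \<Rightarrow> nat set \<Rightarrow> real" where
  "mu_F d Sig F = Max ((\<lambda>j. \<Sum>i\<in>F. \<bar>sub_solve Sig F (\<lambda>i. Sig i j) i\<bar>) ` ({..<d} - F))"

definition risk :: "'w measure \<Rightarrow> nat \<Rightarrow> ('w \<Rightarrow> nat \<Rightarrow> real) \<Rightarrow> ('w \<Rightarrow> real) \<Rightarrow> (nat \<Rightarrow> real) \<Rightarrow> real" where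
  "risk M d X Y b = (\<integral>\<omega>. (Y \<omega> - inner_d d (X \<omega>) b)\<^sup>2 \<partial>M)"

definition betaS :: "'w measure \<Rightarrow> nat \<Rightarrow> ('w \<Rightarrow> nat \<Rightarrow> real) \<Rightarrow> ('w \<Rightarrow> real) \<Rightarrow> nat set \<Rightarrow> (nat \<Rightarrow> real)" where
  "betaS M d X Y S = arg_min (risk M d X Y) (\<lambda>b. supp b \<subseteq> S)"

definition Zs :: "'w measure \<Rightarrow> nat \<Rightarrow> ('w \<Rightarrow> nat \<Rightarrow> real) \<Rightarrow> ('w \<Rightarrow> real) \<Rightarrow> nat set \<Rightarrow> nat \<Rightarrow> real" where
  "Zs M d X Y S i = (\<integral>\<omega>. X \<omega> i * (Y \<omega> - inner_d d (X \<omega>) (betaS M d X Y S)) \<partial>M)"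

end

theory Submission
  imports Defs
begin

text \<open>Write Delta = beta* - beta^S, which is supported on S*. Expanding the risk shows
Z^S = Sigma Delta (the noise is orthogonal to every coordinate of x), and first-order optimality
of beta^S makes Z^S vanish on S. Hence, by Cauchy-Schwarz,
  rho |Delta|^2 <= Delta' Sigma Delta = sum over S* - S of Delta_i Z_i <= |Delta| sqrt(s* - k) max |Z_i|,
which is the claim with the larger constant rho >= sqrt(rho^3 / L). The lower eigenvalue bound yields positive
definiteness through a minimiser of the quadratic form on the compact unit sphere, which is an
eigenvector; beta^S, defined by choice, exists because the risk is coercive on vectors supported
in S.\<close>

section \<open>Quadratic forms on finitely supported vectors\<close>

definition quad_form :: "(nat \<Rightarrow> nat \<Rightarrow> real) \<Rightarrow> nat set \<Rightarrow> (nat \<Rightarrow> real) \<Rightarrow> real" where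
  "quad_form A F v = (\<Sum>i\<in>F. \<Sum>j\<in>F. v i * A i j * v j)"

lemma quad_form_eq_sum_mult: "quad_form A F v = (\<Sum>i\<in>F. v i * (\<Sum>j\<in>F. A i j * v j))"
  by (simp add: quad_form_def sum_distrib_left mult.assoc)

lemma quad_form_scale: "quad_form A F (\<lambda>i. c * v i) = c\<^sup>2 * quad_form A F v"
  by (simp add: quad_form_def sum_distrib_left power2_eq_square mult_ac)

lemma quad_form_add_scaled:
  assumes sym: "\<And>i j. A i j = A j i"
  shows "quad_form A F (\<lambda>i. v i + t * u i)
    = quad_form A F v + 2 * t * (\<Sum>i\<in>F. u i * (\<Sum>j\<in>F. A i j * v j)) + t\<^sup>2 * quad_form A F u"
proof -
  have expand: "quad_form A F (\<lambda>i. v i + t * u i) = quad_form A F v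
      + t * (\<Sum>i\<in>F. \<Sum>j\<in>F. u i * A i j * v j) + t * (\<Sum>i\<in>F. \<Sum>j\<in>F. v i * A i j * u j)
      + t\<^sup>2 * quad_form A F u"
    by (simp add: quad_form_def algebra_simps power2_eq_square sum.distrib sum_distrib_left)
  have swap: "(\<Sum>i\<in>F. \<Sum>j\<in>F. v i * A i j * u j) = (\<Sum>i\<in>F. \<Sum>j\<in>F. u i * A i j * v j)"
    by (subst sum.swap) (simp add: sym mult_ac)
  have "(\<Sum>i\<in>F. \<Sum>j\<in>F. u i * A i j * v j) = (\<Sum>i\<in>F. u i * (\<Sum>j\<in>F. A i j * v j))"
    by (simp add: sum_distrib_left mult.assoc)
  then show ?thesis
    unfolding expand swap by simp
qed

lemma quad_form_shift_diagonal:
  assumes "finite F"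
  shows "quad_form (\<lambda>i j. A i j - (if i = j then c else 0)) F v
    = quad_form A F v - c * (\<Sum>i\<in>F. (v i)\<^sup>2)"
proof -
  have "(\<Sum>j\<in>F. (A i j - (if i = j then c else 0)) * v j) = (\<Sum>j\<in>F. A i j * v j) - c * v i"
    if "i \<in> F" for i
    using assms that
    by (simp add: left_diff_distrib sum_subtractf if_distrib[of "\<lambda>x. x * _"] cong: if_cong)
  then show ?thesis
    by (simp add: quad_form_eq_sum_mult right_diff_distrib sum_subtractf sum_distrib_left
        power2_eq_square mult_ac cong: sum.cong)
qed

lemma quad_form_mono_neutral:
  assumes "finite T" "F \<subseteq> T" "supp v \<subseteq> F"
  shows "quad_form A T v = quad_form A F v"
proof -
  have out: "v i = 0" if "i \<notin> F" for i
    using assms(3) that by (auto simp: supp_def)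
  have "quad_form A T v = (\<Sum>i\<in>F. \<Sum>j\<in>T. v i * A i j * v j)"
    unfolding quad_form_def using assms(1,2) out by (intro sum.mono_neutral_right) auto
  also have "\<dots> = quad_form A F v"
    unfolding quad_form_def using assms(1,2) out
    by (intro sum.cong refl sum.mono_neutral_right) auto
  finally show ?thesis .
qed

lemma continuous_on_quad_form: "continuous_on K (quad_form A F)"
  unfolding quad_form_def
  by (intro continuous_intros continuous_on_subset[OF continuous_on_product_coordinates]) auto

lemma linear_coeff_eq_0_if_nonneg:
  fixes a b :: real
  assumes "\<And>t. 0 \<le> a * t + b * t\<^sup>2"
  shows "a = 0"
proof -
  define t where "t = - a / (\<bar>b\<bar> + 1)"
  have t: "t * (\<bar>b\<bar> + 1) = - a"
    by (simp add: t_def add_nonneg_pos)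
  have "0 \<le> (a * t + b * t\<^sup>2) * (\<bar>b\<bar> + 1)\<^sup>2"
    using assms by simp
  also have "\<dots> = a * (t * (\<bar>b\<bar> + 1)) * (\<bar>b\<bar> + 1) + b * (t * (\<bar>b\<bar> + 1))\<^sup>2"
    by (simp add: algebra_simps power2_eq_square)
  also have "\<dots> = a\<^sup>2 * (b - \<bar>b\<bar> - 1)"
    unfolding t by (simp add: algebra_simps power2_eq_square)
  also have "\<dots> \<le> - a\<^sup>2"
    using mult_left_mono[of "b - \<bar>b\<bar> - 1" "-1" "a\<^sup>2"] by simp
  finally show ?thesis by simp
qed

lemma compact_support_box:
  "compact {v :: nat \<Rightarrow> real. supp v \<subseteq> F \<and> (\<forall>i\<in>F. \<bar>v i\<bar> \<le> R)}"
proof -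
  have "{v :: nat \<Rightarrow> real. supp v \<subseteq> F \<and> (\<forall>i\<in>F. \<bar>v i\<bar> \<le> R)}
      = PiE UNIV (\<lambda>i. if i \<in> F then {-R..R} else {0})"
    by (fastforce simp: supp_def PiE_iff abs_le_iff subset_iff split: if_splits)
  moreover have "compactin (product_topology (\<lambda>i. euclidean) UNIV)
      (PiE UNIV (\<lambda>i. if i \<in> F then {-R..R} else {0::real}))"
    by (subst compactin_PiE) auto
  ultimately show ?thesis by (simp add: euclidean_product_topology)
qed

lemma psd_quad_form_eq_0_imp_kernel:
  assumes "finite F" and sym: "\<And>i j. B i j = B j i"
    and psd: "\<And>w. supp w \<subseteq> F \<Longrightarrow> 0 \<le> quad_form B F w"
    and "supp v \<subseteq> F" and "quad_form B F v = 0" and "i \<in> F"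
  shows "(\<Sum>j\<in>F. B i j * v j) = 0"
proof -
  define r where "r i = (\<Sum>j\<in>F. B i j * v j)" for i
  define u where "u i = (if i \<in> F then r i else 0)" for i
  have "0 \<le> 2 * (\<Sum>i\<in>F. u i * r i) * t + quad_form B F u * t\<^sup>2" for t
  proof -
    have "supp (\<lambda>i. v i + t * u i) \<subseteq> F"
      using \<open>supp v \<subseteq> F\<close> by (auto simp: supp_def u_def)
    then have "0 \<le> quad_form B F (\<lambda>i. v i + t * u i)"
      by (rule psd)
    then show ?thesis
      using quad_form_add_scaled[of B F v t u, OF sym] \<open>quad_form B F v = 0\<close>
      by (simp add: r_def mult_ac)
  qed
  then have "2 * (\<Sum>i\<in>F. u i * r i) = 0"
    by (rule linear_coeff_eq_0_if_nonneg)
  then have "(\<Sum>i\<in>F. (r i)\<^sup>2) = 0"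
    by (simp add: u_def power2_eq_square)
  then show ?thesis
    using \<open>finite F\<close> \<open>i \<in> F\<close> by (simp add: sum_nonneg_eq_0_iff r_def)
qed

lemma quad_form_attains_min_on_unit_sphere:
  assumes "finite F" and "F \<noteq> {}"
  obtains v where "supp v \<subseteq> F" and "(\<Sum>i\<in>F. (v i)\<^sup>2) = 1"
    and "\<And>w. supp w \<subseteq> F \<Longrightarrow> (\<Sum>i\<in>F. (w i)\<^sup>2) = 1 \<Longrightarrow> quad_form A F v \<le> quad_form A F w"
proof -
  define K where "K = {v :: nat \<Rightarrow> real. supp v \<subseteq> F \<and> (\<forall>i\<in>F. \<bar>v i\<bar> \<le> 1)}
    \<inter> {v. (\<Sum>i\<in>F. (v i)\<^sup>2) = 1}"
  have sphere_in_K: "w \<in> K" if "supp w \<subseteq> F" "(\<Sum>i\<in>F. (w i)\<^sup>2) = 1" for w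
  proof -
    have "\<bar>w i\<bar> \<le> 1" if "i \<in> F" for i
    proof -
      have "(w i)\<^sup>2 \<le> (\<Sum>i\<in>F. (w i)\<^sup>2)"
        using \<open>finite F\<close> \<open>i \<in> F\<close> by (intro member_le_sum) auto
      then show ?thesis
        using \<open>(\<Sum>i\<in>F. (w i)\<^sup>2) = 1\<close> by (simp add: abs_square_le_1)
    qed
    then show ?thesis
      using that by (simp add: K_def)
  qed
  obtain i0 where "i0 \<in> F"
    using \<open>F \<noteq> {}\<close> by blast
  then have "(\<lambda>i. if i = i0 then 1 else 0) \<in> K"
    using \<open>finite F\<close> by (intro sphere_in_K) (auto simp: supp_def if_distrib[of "\<lambda>x. x\<^sup>2"] cong: if_cong)
  moreover have "compact K"
    unfolding K_def
    by (intro compact_Int_closed compact_support_box closed_Collect_eq continuous_intros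
        continuous_on_subset[OF continuous_on_product_coordinates]) auto
  ultimately obtain v where "v \<in> K" and min: "\<And>w. w \<in> K \<Longrightarrow> quad_form A F v \<le> quad_form A F w"
    using continuous_attains_inf[of K "quad_form A F"] continuous_on_quad_form by blast
  show ?thesis
  proof (rule that)
    show "supp v \<subseteq> F" "(\<Sum>i\<in>F. (v i)\<^sup>2) = 1"
      using \<open>v \<in> K\<close> by (auto simp: K_def)
    show "quad_form A F v \<le> quad_form A F w" if "supp w \<subseteq> F" "(\<Sum>i\<in>F. (w i)\<^sup>2) = 1" for w
      using min sphere_in_K that by blast
  qed
qed

lemma quad_form_ge_min_on_unit_sphere:
  assumes "finite F"
    and min: "\<And>w. supp w \<subseteq> F \<Longrightarrow> (\<Sum>i\<in>F. (w i)\<^sup>2) = 1 \<Longrightarrow> quad_form A F v \<le> quad_form A F w"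
    and "supp w \<subseteq> F"
  shows "quad_form A F v * (\<Sum>i\<in>F. (w i)\<^sup>2) \<le> quad_form A F w"
proof -
  define n where "n = sqrt (\<Sum>i\<in>F. (w i)\<^sup>2)"
  have n2: "n\<^sup>2 = (\<Sum>i\<in>F. (w i)\<^sup>2)"
    by (simp add: n_def sum_nonneg)
  show ?thesis
  proof (cases "n = 0")
    case True
    then have "\<forall>i\<in>F. w i = 0"
      using n2 \<open>finite F\<close> by (simp add: sum_nonneg_eq_0_iff)
    then show ?thesis
      using n2 True by (simp add: quad_form_def)
  next
    case False
    have "supp (\<lambda>i. (1 / n) * w i) \<subseteq> F"
      using \<open>supp w \<subseteq> F\<close> by (auto simp: supp_def)
    moreover have "(\<Sum>i\<in>F. ((1 / n) * w i)\<^sup>2) = 1"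
      using False by (simp add: power_mult_distrib power_divide flip: sum_divide_distrib n2)
    ultimately have "quad_form A F v \<le> (1 / n)\<^sup>2 * quad_form A F w"
      using min quad_form_scale by metis
    then show ?thesis
      using False by (simp flip: n2 add: power_divide field_simps)
  qed
qed

lemma quad_form_ge_if_sub_eigenvalues_ge:
  assumes "finite F" and sym: "\<And>i j. A i j = A j i"
    and eig: "\<And>mu. sub_eigenvalue A F mu \<Longrightarrow> rho \<le> mu"
    and "supp w \<subseteq> F"
  shows "rho * (\<Sum>i\<in>F. (w i)\<^sup>2) \<le> quad_form A F w"
proof (cases "F = {}")
  case True
  then show ?thesis by (simp add: quad_form_def)
next
  case False
  then obtain v where v: "supp v \<subseteq> F" "(\<Sum>i\<in>F. (v i)\<^sup>2) = 1"
    and min: "\<And>w. supp w \<subseteq> F \<Longrightarrow> (\<Sum>i\<in>F. (w i)\<^sup>2) = 1 \<Longrightarrow> quad_form A F v \<le> quad_form A F w"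
    using quad_form_attains_min_on_unit_sphere[OF \<open>finite F\<close>] by blast
  define lam where "lam = quad_form A F v"
  \<comment> \<open>\<open>B = A - lam I\<close> is positive semidefinite and vanishes at \<open>v\<close>, so \<open>v\<close> is an eigenvector.\<close>
  define B where "B i j = A i j - (if i = j then lam else 0)" for i j
  have B_eq: "quad_form B F w = quad_form A F w - lam * (\<Sum>i\<in>F. (w i)\<^sup>2)" for w
    unfolding B_def using \<open>finite F\<close> by (rule quad_form_shift_diagonal)
  have "sub_eigenvalue A F lam"
    unfolding sub_eigenvalue_def
  proof (intro exI[of _ v] conjI ballI)
    show "supp v \<subseteq> F" "v \<noteq> (\<lambda>_. 0)"
      using v by auto
    fix i assume "i \<in> F"
    have "(\<Sum>j\<in>F. B i j * v j) = 0"
    proof (rule psd_quad_form_eq_0_imp_kernel[OF \<open>finite F\<close> _ _ \<open>supp v \<subseteq> F\<close> _ \<open>i \<in> F\<close>])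
      show "B i j = B j i" for i j
        by (simp add: B_def sym)
      show "0 \<le> quad_form B F w" if "supp w \<subseteq> F" for w
        using quad_form_ge_min_on_unit_sphere[OF \<open>finite F\<close> min that] by (simp add: B_eq lam_def)
      show "quad_form B F v = 0"
        using v by (simp add: B_eq lam_def)
    qed
    then show "(\<Sum>k\<in>F. A i k * v k) = lam * v i"
      using \<open>finite F\<close> \<open>i \<in> F\<close>
      by (simp add: B_def left_diff_distrib sum_subtractf if_distrib[of "\<lambda>x. x * _"] cong: if_cong)
  qed
  then have "rho * (\<Sum>i\<in>F. (w i)\<^sup>2) \<le> lam * (\<Sum>i\<in>F. (w i)\<^sup>2)"
    using eig by (intro mult_right_mono sum_nonneg) auto
  also have "\<dots> \<le> quad_form A F w"
    using quad_form_ge_min_on_unit_sphere[OF \<open>finite F\<close> min \<open>supp w \<subseteq> F\<close>] by (simp add: lam_def mult.commute)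
  finally show ?thesis .
qed

lemma quad_form_minus_linear_pos:
  fixes b c :: "nat \<Rightarrow> real"
  assumes "0 < rho" and "rho * (\<Sum>i\<in>T. (b i)\<^sup>2) \<le> quad_form A T b"
    and "4 * (\<Sum>i\<in>T. (c i)\<^sup>2) / rho\<^sup>2 < (\<Sum>i\<in>T. (b i)\<^sup>2)"
  shows "0 < quad_form A T b - 2 * (\<Sum>i\<in>T. b i * c i)"
proof -
  have "2 * (b i * c i) \<le> rho / 2 * (b i)\<^sup>2 + 2 / rho * (c i)\<^sup>2" for i
  proof -
    have "0 \<le> (rho * b i - 2 * c i)\<^sup>2 / (2 * rho)"
      using \<open>0 < rho\<close> by simp
    also have "\<dots> = rho / 2 * (b i)\<^sup>2 + 2 / rho * (c i)\<^sup>2 - 2 * (b i * c i)"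
      using \<open>0 < rho\<close> by (simp add: field_simps power2_eq_square)
    finally show ?thesis by simp
  qed
  then have "2 * (\<Sum>i\<in>T. b i * c i) \<le> rho / 2 * (\<Sum>i\<in>T. (b i)\<^sup>2) + 2 / rho * (\<Sum>i\<in>T. (c i)\<^sup>2)"
    by (simp add: sum_distrib_left sum.distrib[symmetric] sum_mono)
  moreover have "2 / rho * (\<Sum>i\<in>T. (c i)\<^sup>2) < rho / 2 * (\<Sum>i\<in>T. (b i)\<^sup>2)"
    using assms(1,3) by (simp add: field_simps power2_eq_square)
  ultimately show ?thesis
    using assms(2) by linarith
qed

lemma sum_squares_gt_if_coordinate_gt:
  fixes b :: "nat \<Rightarrow> real"
  assumes "finite T" and "i \<in> T" and "1 \<le> R" and "R < \<bar>b i\<bar>"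
  shows "R < (\<Sum>j\<in>T. (b j)\<^sup>2)"
proof -
  have "\<bar>b i\<bar> * 1 \<le> \<bar>b i\<bar> * \<bar>b i\<bar>"
    using assms(3,4) by (intro mult_left_mono) auto
  then have "R < (b i)\<^sup>2"
    using assms(4) by (simp add: power2_eq_square abs_mult_self_eq)
  also have "\<dots> \<le> (\<Sum>j\<in>T. (b j)\<^sup>2)"
    using assms(1,2) by (intro member_le_sum) auto
  finally show ?thesis .
qed

lemma quad_form_minus_linear_attains_min:
  fixes c :: "nat \<Rightarrow> real"
  assumes "finite T" and "S \<subseteq> T" and "0 < rho"
    and pd: "\<And>v. supp v \<subseteq> S \<Longrightarrow> rho * (\<Sum>i\<in>T. (v i)\<^sup>2) \<le> quad_form A T v"
  obtains b where "supp b \<subseteq> S"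
    and "\<And>b'. supp b' \<subseteq> S \<Longrightarrow>
      quad_form A T b - 2 * (\<Sum>i\<in>T. b i * c i) \<le> quad_form A T b' - 2 * (\<Sum>i\<in>T. b' i * c i)"
proof -
  define f where "f b = quad_form A T b - 2 * (\<Sum>i\<in>T. b i * c i)" for b
  define D where "D = (\<Sum>i\<in>T. (c i)\<^sup>2)"
  \<comment> \<open>Outside the box of radius \<open>R\<close> the objective is positive, i.e. above its value at 0.\<close>
  define R where "R = 4 * D / rho\<^sup>2 + 1"
  have "R \<ge> 1"
    using \<open>0 < rho\<close> by (simp add: R_def D_def sum_nonneg)
  define K where "K = {v :: nat \<Rightarrow> real. supp v \<subseteq> S \<and> (\<forall>i\<in>S. \<bar>v i\<bar> \<le> R)}"
  have "(\<lambda>_. 0) \<in> K"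
    using \<open>R \<ge> 1\<close> by (simp add: K_def supp_def)
  moreover have "continuous_on K f"
    unfolding f_def
    by (intro continuous_intros continuous_on_quad_form
        continuous_on_subset[OF continuous_on_product_coordinates]) auto
  ultimately obtain b where "b \<in> K" and min: "\<And>b'. b' \<in> K \<Longrightarrow> f b \<le> f b'"
    using continuous_attains_inf[of K f] compact_support_box[of S R] unfolding K_def by blast
  have "f b \<le> 0"
    using min[OF \<open>(\<lambda>_. 0) \<in> K\<close>] by (simp add: f_def quad_form_def)
  show ?thesis
  proof (rule that)
    show "supp b \<subseteq> S"
      using \<open>b \<in> K\<close> by (simp add: K_def)
    fix b' assume "supp b' \<subseteq> S"
    have "f b \<le> f b'"
    proof (cases "b' \<in> K")
      case True
      then show ?thesis by (rule min)
    next
      case False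
      then obtain i where "i \<in> S" and "R < \<bar>b' i\<bar>"
        using \<open>supp b' \<subseteq> S\<close> by (auto simp: K_def not_le)
      then have "R < (\<Sum>i\<in>T. (b' i)\<^sup>2)"
        using \<open>finite T\<close> \<open>S \<subseteq> T\<close> \<open>R \<ge> 1\<close> by (intro sum_squares_gt_if_coordinate_gt) auto
      then have "4 * D / rho\<^sup>2 < (\<Sum>i\<in>T. (b' i)\<^sup>2)"
        by (simp add: R_def)
      then have "0 < f b'"
        unfolding f_def D_def by (rule quad_form_minus_linear_pos[OF \<open>0 < rho\<close> pd[OF \<open>supp b' \<subseteq> S\<close>]])
      then show ?thesis
        using \<open>f b \<le> 0\<close> by simp
    qed
    then show "quad_form A T b - 2 * (\<Sum>i\<in>T. b i * c i) \<le> quad_form A T b' - 2 * (\<Sum>i\<in>T. b' i * c i)"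
      by (simp add: f_def)
  qed
qed

lemma norm2_on_eq_L2_set: "norm2_on A v = L2_set v A"
  by (simp add: norm2_on_def L2_set_def)

lemma sum_mult_le_L2_set_sqrt_card:
  assumes "finite A" and "0 \<le> m" and "\<And>i. i \<in> A \<Longrightarrow> \<bar>z i\<bar> \<le> m"
  shows "(\<Sum>i\<in>A. u i * z i) \<le> L2_set u A * (sqrt (card A) * m)"
proof -
  have "(\<Sum>i\<in>A. u i * z i) \<le> (\<Sum>i\<in>A. \<bar>u i\<bar> * \<bar>z i\<bar>)"
    by (intro sum_mono) (simp flip: abs_mult)
  also have "\<dots> \<le> L2_set u A * L2_set z A"
    by (rule L2_set_mult_ineq)
  also have "L2_set z A \<le> L2_set (\<lambda>_. m) A"
    using L2_set_mono[of A "\<lambda>i. \<bar>z i\<bar>" "\<lambda>_. m"] assms(3) by (simp add: L2_set_def)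
  then have "L2_set u A * L2_set z A \<le> L2_set u A * (sqrt (card A) * m)"
    using \<open>0 \<le> m\<close> by (intro mult_left_mono) (simp_all add: L2_set_constant)
  finally show ?thesis .
qed

section \<open>Noise with conditional mean zero\<close>

lemma sets_gen_sigma:
  "sets (gen_sigma M d X) = sigma_sets (space M) {{\<omega> \<in> space M. X \<omega> i \<in> B} | i B. i < d \<and> B \<in> sets borel}"
  unfolding gen_sigma_def by (rule sets_measure_of) auto

lemma space_gen_sigma: "space (gen_sigma M d X) = space M"
  unfolding gen_sigma_def by (rule space_measure_of_conv)

lemma subalgebra_gen_sigma:
  assumes "\<And>i. i < d \<Longrightarrow> (\<lambda>\<omega>. X \<omega> i) \<in> borel_measurable M"
  shows "subalgebra M (gen_sigma M d X)"
proof -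
  have "{\<omega> \<in> space M. X \<omega> i \<in> B} \<in> sets M" if "i < d" "B \<in> sets borel" for i B
    using measurable_sets[OF assms[OF \<open>i < d\<close>] \<open>B \<in> sets borel\<close>] by (simp add: vimage_def Int_def conj_commute)
  then have "sets (gen_sigma M d X) \<subseteq> sets M"
    unfolding sets_gen_sigma by (intro sets.sigma_sets_subset) auto
  then show ?thesis
    by (simp add: subalgebra_def space_gen_sigma)
qed

lemma measurable_gen_sigma_coordinate:
  assumes "i < d"
  shows "(\<lambda>\<omega>. X \<omega> i) \<in> borel_measurable (gen_sigma M d X)"
proof (rule measurableI)
  fix B :: "real set" assume "B \<in> sets borel"
  then have "{\<omega> \<in> space M. X \<omega> i \<in> B} \<in> sets (gen_sigma M d X)"
    unfolding sets_gen_sigma using \<open>i < d\<close> by (intro sigma_sets.Basic) blast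
  then show "(\<lambda>\<omega>. X \<omega> i) -` B \<inter> space (gen_sigma M d X) \<in> sets (gen_sigma M d X)"
    by (simp add: space_gen_sigma vimage_def Int_def conj_commute)
qed simp

lemma (in prob_space) integral_coordinate_mult_eq_0_if_cond_exp_eq_0:
  assumes X_meas: "\<And>i. i < d \<Longrightarrow> (\<lambda>\<omega>. X \<omega> i) \<in> borel_measurable M"
    and eps_meas: "eps \<in> borel_measurable M"
    and noise: "AE \<omega> in M. real_cond_exp M (gen_sigma M d X) eps \<omega> = 0"
    and "i < d" and "integrable M (\<lambda>\<omega>. X \<omega> i * eps \<omega>)"
  shows "(\<integral>\<omega>. X \<omega> i * eps \<omega> \<partial>M) = 0"
proof -
  interpret finite_measure_subalgebra M "gen_sigma M d X"
    by unfold_locales (rule subalgebra_gen_sigma[OF X_meas])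
  have "(\<integral>\<omega>. X \<omega> i * eps \<omega> \<partial>M) = (\<integral>\<omega>. X \<omega> i * real_cond_exp M (gen_sigma M d X) eps \<omega> \<partial>M)"
    using real_cond_exp_intg(2)[OF assms(5) measurable_gen_sigma_coordinate[OF \<open>i < d\<close>] eps_meas]
    by simp
  also have "\<dots> = (\<integral>\<omega>. 0 \<partial>M)"
    using noise X_meas[OF \<open>i < d\<close>] borel_measurable_cond_exp2 by (intro integral_cong_AE) auto
  finally show ?thesis by simp
qed

section \<open>The regression model\<close>

lemma supp_subset_lessThan: "(\<And>i. d \<le> i \<Longrightarrow> v i = 0) \<Longrightarrow> supp v \<subseteq> {..<d}"
  by (force simp: supp_def not_less[symmetric])

lemma covx_sym: "covx M X i j = covx M X j i"
  by (simp add: covx_def mult.commute)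

locale sparse_regression = prob_space M
  for M :: "'w measure" and d :: nat and X :: "'w \<Rightarrow> nat \<Rightarrow> real" and Y eps :: "'w \<Rightarrow> real"
    and beta_star :: "nat \<Rightarrow> real" and Mx rho :: real +
  assumes X_meas: "\<And>i. i < d \<Longrightarrow> (\<lambda>\<omega>. X \<omega> i) \<in> borel_measurable M"
    and Y_meas: "Y \<in> borel_measurable M"
    and beta_dim: "\<And>i. d \<le> i \<Longrightarrow> beta_star i = 0"
    and mean0: "\<And>i. i < d \<Longrightarrow> (\<integral>\<omega>. X \<omega> i \<partial>M) = 0"
    and model: "\<And>\<omega>. \<omega> \<in> space M \<Longrightarrow> Y \<omega> = inner_d d beta_star (X \<omega>) + eps \<omega>"
    and noise: "AE \<omega> in M. real_cond_exp M (gen_sigma M d X) eps \<omega> = 0"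
    and y_bdd: "AE \<omega> in M. \<bar>Y \<omega>\<bar> < 1"
    and x_bdd: "AE \<omega> in M. \<forall>i<d. \<bar>X \<omega> i\<bar> < Mx"
    and rho_pos: "0 < rho"
    and eigenvalues_ge: "\<And>mu. sub_eigenvalue (covx M X) (supp beta_star) mu \<Longrightarrow> rho \<le> mu"
begin

definition moment_xy :: "nat \<Rightarrow> real" where
  "moment_xy i = (\<integral>\<omega>. X \<omega> i * Y \<omega> \<partial>M)"

definition moment_yy :: real where
  "moment_yy = (\<integral>\<omega>. (Y \<omega>)\<^sup>2 \<partial>M)"

definition residual_moment :: "(nat \<Rightarrow> real) \<Rightarrow> nat \<Rightarrow> real" where
  "residual_moment b i = (\<integral>\<omega>. X \<omega> i * (Y \<omega> - inner_d d (X \<omega>) b) \<partial>M)"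

lemma Zs_eq_residual_moment: "Zs M d X Y S i = residual_moment (betaS M d X Y S) i"
  by (simp add: Zs_def residual_moment_def)

lemma integrable_XX:
  assumes "i < d" "j < d"
  shows "integrable M (\<lambda>\<omega>. X \<omega> i * X \<omega> j)"
proof (rule integrable_const_bound)
  show "AE \<omega> in M. norm (X \<omega> i * X \<omega> j) \<le> Mx * Mx"
    using x_bdd by eventually_elim (use assms in \<open>auto simp: abs_mult intro!: mult_mono\<close>)
qed (use assms X_meas in simp)

lemma integrable_XY:
  assumes "i < d"
  shows "integrable M (\<lambda>\<omega>. X \<omega> i * Y \<omega>)"
proof (rule integrable_const_bound)
  show "AE \<omega> in M. norm (X \<omega> i * Y \<omega>) \<le> Mx * 1"
    using x_bdd y_bdd
  proof eventually_elim
    case (elim \<omega>)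
    then have "\<bar>X \<omega> i\<bar> * \<bar>Y \<omega>\<bar> \<le> Mx * 1"
      using assms by (intro mult_mono) auto
    then show ?case
      by (simp add: abs_mult)
  qed
qed (use assms X_meas Y_meas in simp)

lemma integrable_YY: "integrable M (\<lambda>\<omega>. (Y \<omega>)\<^sup>2)"
proof (rule integrable_const_bound)
  show "AE \<omega> in M. norm ((Y \<omega>)\<^sup>2) \<le> 1"
    using y_bdd by eventually_elim (simp add: abs_square_le_1)
qed (use Y_meas in simp)

lemma covx_eq_moment:
  assumes "i < d" "j < d"
  shows "covx M X i j = (\<integral>\<omega>. X \<omega> i * X \<omega> j \<partial>M)"
  using assms by (simp add: covx_def mean0)

lemma risk_eq_quadratic:
  "risk M d X Y b = moment_yy - 2 * (\<Sum>i<d. b i * moment_xy i) + quad_form (covx M X) {..<d} b"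
proof -
  have "(Y \<omega> - inner_d d (X \<omega>) b)\<^sup>2 = (Y \<omega>)\<^sup>2 - 2 * (\<Sum>i<d. b i * (X \<omega> i * Y \<omega>))
      + (\<Sum>i<d. \<Sum>j<d. b i * b j * (X \<omega> i * X \<omega> j))" for \<omega>
  proof -
    have "Y \<omega> * inner_d d (X \<omega>) b = (\<Sum>i<d. b i * (X \<omega> i * Y \<omega>))"
      by (simp add: inner_d_def sum_distrib_left mult_ac)
    moreover have "(inner_d d (X \<omega>) b)\<^sup>2 = (\<Sum>i<d. \<Sum>j<d. b i * b j * (X \<omega> i * X \<omega> j))"
      by (simp add: inner_d_def power2_eq_square sum_product mult_ac)
    ultimately show ?thesis
      by (simp add: power2_diff mult.assoc)
  qed
  then have "risk M d X Y b = (\<integral>\<omega>. (Y \<omega>)\<^sup>2 - 2 * (\<Sum>i<d. b i * (X \<omega> i * Y \<omega>))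
      + (\<Sum>i<d. \<Sum>j<d. b i * b j * (X \<omega> i * X \<omega> j)) \<partial>M)"
    by (simp add: risk_def)
  also have "\<dots> = moment_yy - 2 * (\<integral>\<omega>. (\<Sum>i<d. b i * (X \<omega> i * Y \<omega>)) \<partial>M)
      + (\<integral>\<omega>. (\<Sum>i<d. \<Sum>j<d. b i * b j * (X \<omega> i * X \<omega> j)) \<partial>M)"
  proof -
    have "integrable M (\<lambda>\<omega>. \<Sum>i<d. b i * (X \<omega> i * Y \<omega>))"
      by (intro Bochner_Integration.integrable_sum integrable_mult_right integrable_XY) simp
    moreover have "integrable M (\<lambda>\<omega>. \<Sum>i<d. \<Sum>j<d. b i * b j * (X \<omega> i * X \<omega> j))"
      by (intro Bochner_Integration.integrable_sum integrable_mult_right integrable_XX) simp_all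
    ultimately show ?thesis
      using integrable_YY by (simp add: moment_yy_def)
  qed
  also have "\<dots> = moment_yy - 2 * (\<Sum>i<d. b i * moment_xy i)
      + (\<Sum>i<d. \<Sum>j<d. b i * b j * covx M X i j)"
  proof -
    have "(\<integral>\<omega>. (\<Sum>j<d. b i * b j * (X \<omega> i * X \<omega> j)) \<partial>M) = (\<Sum>j<d. b i * b j * covx M X i j)"
      if "i < d" for i
      using that integrable_XX by (simp add: covx_eq_moment)
    then show ?thesis
      using integrable_XY
      by (subst (1 2) Bochner_Integration.integral_sum)
        (auto simp: moment_xy_def intro!: Bochner_Integration.integrable_sum integrable_XX)
  qed
  finally show ?thesis
    by (simp add: quad_form_def mult_ac)
qed

lemma residual_moment_integrand_eq:
  "X \<omega> i * (Y \<omega> - inner_d d (X \<omega>) b) = X \<omega> i * Y \<omega> - (\<Sum>j<d. b j * (X \<omega> i * X \<omega> j))"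
  by (simp add: inner_d_def right_diff_distrib sum_distrib_left mult_ac)

lemma integrable_residual:
  assumes "i < d"
  shows "integrable M (\<lambda>\<omega>. X \<omega> i * (Y \<omega> - inner_d d (X \<omega>) b))"
  unfolding residual_moment_integrand_eq using assms
  by (intro Bochner_Integration.integrable_diff Bochner_Integration.integrable_sum
      integrable_mult_right integrable_XX integrable_XY) auto

lemma residual_moment_eq_moments:
  assumes "i < d"
  shows "residual_moment b i = moment_xy i - (\<Sum>j<d. covx M X i j * b j)"
  unfolding residual_moment_def residual_moment_integrand_eq using assms integrable_XX integrable_XY
  by (subst Bochner_Integration.integral_diff)
    (auto simp: moment_xy_def covx_eq_moment mult.commute
      intro!: Bochner_Integration.integrable_sum)

lemma residual_moment_beta_star:
  assumes "i < d"
  shows "residual_moment beta_star i = 0"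
proof -
  have eps_eq: "eps \<omega> = Y \<omega> - inner_d d (X \<omega>) beta_star" if "\<omega> \<in> space M" for \<omega>
    using model[OF that] by (simp add: inner_d_def mult.commute)
  have eps_meas: "eps \<in> borel_measurable M"
    using Y_meas X_meas
    by (subst measurable_cong[OF eps_eq]) (auto simp: inner_d_def)
  have "integrable M (\<lambda>\<omega>. X \<omega> i * eps \<omega>)
      \<longleftrightarrow> integrable M (\<lambda>\<omega>. X \<omega> i * (Y \<omega> - inner_d d (X \<omega>) beta_star))"
    by (intro Bochner_Integration.integrable_cong) (simp_all add: eps_eq)
  then have integrable_X_eps: "integrable M (\<lambda>\<omega>. X \<omega> i * eps \<omega>)"
    using integrable_residual[OF assms] by simp
  have "(\<integral>\<omega>. X \<omega> i * eps \<omega> \<partial>M) = 0"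
    using X_meas eps_meas noise assms integrable_X_eps by (rule integral_coordinate_mult_eq_0_if_cond_exp_eq_0)
  then show ?thesis
    unfolding residual_moment_def by (simp add: eps_eq cong: Bochner_Integration.integral_cong)
qed

lemma residual_moment_eq:
  assumes "i < d"
  shows "residual_moment b i = (\<Sum>j<d. covx M X i j * (beta_star j - b j))"
  using residual_moment_eq_moments[OF assms, of b] residual_moment_eq_moments[OF assms, of beta_star]
    residual_moment_beta_star[OF assms]
  by (simp add: right_diff_distrib sum_subtractf)

lemma risk_add_scaled:
  "risk M d X Y (\<lambda>i. b i + t * u i)
    = risk M d X Y b - 2 * t * (\<Sum>i<d. u i * residual_moment b i) + t\<^sup>2 * quad_form (covx M X) {..<d} u"
proof -
  have residual: "(\<Sum>i<d. u i * residual_moment b i)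
      = (\<Sum>i<d. u i * moment_xy i) - (\<Sum>i<d. u i * (\<Sum>j<d. covx M X i j * b j))"
    by (simp add: residual_moment_eq_moments right_diff_distrib sum_subtractf)
  have linear: "(\<Sum>i<d. (b i + t * u i) * moment_xy i)
      = (\<Sum>i<d. b i * moment_xy i) + t * (\<Sum>i<d. u i * moment_xy i)"
    by (simp add: distrib_right sum.distrib sum_distrib_left mult.assoc)
  show ?thesis
    unfolding risk_eq_quadratic quad_form_add_scaled[OF covx_sym] residual linear
    by (simp add: algebra_simps)
qed

lemma supp_beta_star_subset: "supp beta_star \<subseteq> {..<d}"
  using beta_dim by (rule supp_subset_lessThan)

lemma quad_form_covx_ge:
  assumes "supp v \<subseteq> supp beta_star"
  shows "rho * (\<Sum>i<d. (v i)\<^sup>2) \<le> quad_form (covx M X) {..<d} v"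
proof -
  have "finite (supp beta_star)"
    using supp_beta_star_subset finite_subset by blast
  then have "rho * (\<Sum>i\<in>supp beta_star. (v i)\<^sup>2) \<le> quad_form (covx M X) (supp beta_star) v"
    using covx_sym eigenvalues_ge assms by (rule quad_form_ge_if_sub_eigenvalues_ge)
  moreover have "(\<Sum>i<d. (v i)\<^sup>2) = (\<Sum>i\<in>supp beta_star. (v i)\<^sup>2)"
    using supp_beta_star_subset assms by (intro sum.mono_neutral_right) (auto simp: supp_def)
  ultimately show ?thesis
    using quad_form_mono_neutral[OF _ supp_beta_star_subset assms] by simp
qed

lemma betaS_is_arg_min:
  assumes "S \<subseteq> supp beta_star"
  shows "is_arg_min (risk M d X Y) (\<lambda>b. supp b \<subseteq> S) (betaS M d X Y S)"
proof -
  obtain b where "supp b \<subseteq> S" and min: "\<And>b'. supp b' \<subseteq> S \<Longrightarrow>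
      quad_form (covx M X) {..<d} b - 2 * (\<Sum>i<d. b i * moment_xy i)
      \<le> quad_form (covx M X) {..<d} b' - 2 * (\<Sum>i<d. b' i * moment_xy i)"
    using quad_form_minus_linear_attains_min[of "{..<d}" S rho "covx M X"] assms
      supp_beta_star_subset rho_pos quad_form_covx_ge by blast
  then have "is_arg_min (risk M d X Y) (\<lambda>b. supp b \<subseteq> S) b"
    by (auto simp: is_arg_min_def risk_eq_quadratic not_less)
  then show ?thesis
    unfolding betaS_def arg_min_def by (rule someI[where P = "is_arg_min _ _"])
qed

lemma supp_betaS:
  assumes "S \<subseteq> supp beta_star"
  shows "supp (betaS M d X Y S) \<subseteq> S"
  using betaS_is_arg_min[OF assms] by (simp add: is_arg_min_def)

lemma Zs_eq_0_on_S:
  assumes "S \<subseteq> supp beta_star" and "i \<in> S"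
  shows "Zs M d X Y S i = 0"
proof -
  define beta where "beta = betaS M d X Y S"
  define u where "u j = (if j = i then 1 else 0 :: real)" for j
  have "i < d"
    using assms supp_beta_star_subset by auto
  then have pick_i: "(\<Sum>j<d. u j * residual_moment beta j) = residual_moment beta i"
    by (simp add: u_def if_distrib[of "\<lambda>x. x * _"] cong: if_cong)
  have "0 \<le> - 2 * residual_moment beta i * t + quad_form (covx M X) {..<d} u * t\<^sup>2" for t
  proof -
    have "supp (\<lambda>j. beta j + t * u j) \<subseteq> S"
      using supp_betaS[OF assms(1)] \<open>i \<in> S\<close> by (auto simp: beta_def u_def supp_def)
    then have "risk M d X Y beta \<le> risk M d X Y (\<lambda>j. beta j + t * u j)"
      using betaS_is_arg_min[OF assms(1)] by (auto simp: is_arg_min_def beta_def not_less)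
    then show ?thesis
      by (simp add: risk_add_scaled pick_i mult_ac)
  qed
  then have "- 2 * residual_moment beta i = 0"
    by (rule linear_coeff_eq_0_if_nonneg)
  then show ?thesis
    by (simp add: Zs_eq_residual_moment beta_def)
qed

lemma supp_diff_betaS:
  assumes "S \<subseteq> supp beta_star"
  shows "supp (\<lambda>i. beta_star i - betaS M d X Y S i) \<subseteq> supp beta_star"
  using supp_betaS[OF assms] assms by (auto simp: supp_def)

lemma quad_form_diff_betaS_eq_sum_Zs:
  assumes "S \<subseteq> supp beta_star"
  shows "quad_form (covx M X) {..<d} (\<lambda>i. beta_star i - betaS M d X Y S i)
    = (\<Sum>i\<in>supp beta_star - S. (beta_star i - betaS M d X Y S i) * Zs M d X Y S i)"
proof -
  have "quad_form (covx M X) {..<d} (\<lambda>i. beta_star i - betaS M d X Y S i)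
      = (\<Sum>i<d. (beta_star i - betaS M d X Y S i) * Zs M d X Y S i)"
    by (simp add: quad_form_eq_sum_mult Zs_eq_residual_moment residual_moment_eq)
  also have "\<dots> = (\<Sum>i\<in>supp beta_star - S. (beta_star i - betaS M d X Y S i) * Zs M d X Y S i)"
    using supp_beta_star_subset supp_diff_betaS[OF assms] Zs_eq_0_on_S[OF assms]
    by (intro sum.mono_neutral_right) (auto simp: supp_def)
  finally show ?thesis .
qed

lemma Max_abs_Zs_ge:
  assumes "S \<subset> supp beta_star"
  shows "rho * norm2_on {..<d} (\<lambda>i. beta_star i - betaS M d X Y S i)
    \<le> sqrt (real (card (supp beta_star)) - real (card S)) * Max ((\<lambda>i. \<bar>Zs M d X Y S i\<bar>) ` ({..<d} - S))"
proof -
  define Delta where "Delta = (\<lambda>i. beta_star i - betaS M d X Y S i)"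
  define A where "A = supp beta_star - S"
  define Zmax where "Zmax = Max ((\<lambda>i. \<bar>Zs M d X Y S i\<bar>) ` ({..<d} - S))"
  define n where "n = L2_set Delta {..<d}"
  have "finite (supp beta_star)" and "S \<subseteq> supp beta_star"
    using supp_beta_star_subset finite_subset assms by auto
  have "A \<subseteq> {..<d} - S" "finite A" "A \<noteq> {}"
    using supp_beta_star_subset assms \<open>finite (supp beta_star)\<close> by (auto simp: A_def)
  have Z_le: "\<bar>Zs M d X Y S i\<bar> \<le> Zmax" if "i \<in> A" for i
    unfolding Zmax_def using that \<open>A \<subseteq> {..<d} - S\<close> by (intro Max_ge) auto
  have "0 \<le> Zmax"
    using Z_le \<open>A \<noteq> {}\<close> by (meson abs_ge_zero all_not_in_conv order_trans)
  have "rho * n\<^sup>2 \<le> quad_form (covx M X) {..<d} Delta"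
    using quad_form_covx_ge[OF supp_diff_betaS[OF \<open>S \<subseteq> supp beta_star\<close>]]
    by (simp add: n_def Delta_def L2_set_def sum_nonneg)
  also have "\<dots> = (\<Sum>i\<in>A. Delta i * Zs M d X Y S i)"
    unfolding Delta_def A_def by (rule quad_form_diff_betaS_eq_sum_Zs[OF \<open>S \<subseteq> supp beta_star\<close>])
  also have "\<dots> \<le> L2_set Delta A * (sqrt (card A) * Zmax)"
    using \<open>finite A\<close> \<open>0 \<le> Zmax\<close> Z_le by (rule sum_mult_le_L2_set_sqrt_card)
  also have "\<dots> \<le> n * (sqrt (card A) * Zmax)"
    unfolding n_def L2_set_def using \<open>A \<subseteq> {..<d} - S\<close> \<open>0 \<le> Zmax\<close>
    by (intro mult_right_mono real_sqrt_le_mono sum_mono2) auto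
  finally have "(rho * n) * n \<le> (sqrt (card A) * Zmax) * n"
    by (simp add: power2_eq_square mult_ac)
  then have "rho * n \<le> sqrt (card A) * Zmax"
  proof (cases "n = 0")
    case False
    then have "0 < n"
      by (simp add: n_def order_less_le)
    then show ?thesis
      using \<open>(rho * n) * n \<le> (sqrt (card A) * Zmax) * n\<close> by (rule mult_right_le_imp_le[rotated])
  qed (simp add: \<open>0 \<le> Zmax\<close>)
  moreover have "real (card A) = real (card (supp beta_star)) - real (card S)"
    using \<open>S \<subseteq> supp beta_star\<close> \<open>finite (supp beta_star)\<close>
    by (simp add: A_def card_Diff_subset finite_subset card_mono of_nat_diff)
  ultimately show ?thesis
    by (simp add: norm2_on_eq_L2_set n_def Delta_def Zmax_def)
qed

lemma norm2_on_le_norm2_diff_betaS: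
  assumes "S \<subseteq> supp beta_star"
  shows "norm2_on (supp beta_star - S) beta_star \<le> norm2_on {..<d} (\<lambda>i. beta_star i - betaS M d X Y S i)"
proof -
  have "betaS M d X Y S i = 0" if "i \<notin> S" for i
    using supp_betaS[OF assms] that by (auto simp: supp_def)
  then have "norm2_on (supp beta_star - S) beta_star = norm2_on (supp beta_star - S) (\<lambda>i. beta_star i - betaS M d X Y S i)"
    unfolding norm2_on_def by (intro arg_cong[where f = sqrt] sum.cong) auto
  also have "\<dots> \<le> norm2_on {..<d} (\<lambda>i. beta_star i - betaS M d X Y S i)"
    unfolding norm2_on_def using supp_beta_star_subset by (intro real_sqrt_le_mono sum_mono2) auto
  finally show ?thesis .
qed

end

theorem mainTheorem8:
  fixes M :: "'w measure" and d :: nat and X :: "'w \<Rightarrow> nat \<Rightarrow> real"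
    and Y eps :: "'w \<Rightarrow> real" and beta_star :: "nat \<Rightarrow> real"
    and rho L Mx :: real and S :: "nat set"
  assumes prob: "prob_space M"
    and X_meas: "\<And>i. i < d \<Longrightarrow> (\<lambda>\<omega>. X \<omega> i) \<in> borel_measurable M"
    and Y_meas: "Y \<in> borel_measurable M"
    and beta_dim: "\<And>i. i \<ge> d \<Longrightarrow> beta_star i = 0"
    and mean0: "\<And>i. i < d \<Longrightarrow> (\<integral>\<omega>. X \<omega> i \<partial>M) = 0"
    and model: "\<And>\<omega>. \<omega> \<in> space M \<Longrightarrow> Y \<omega> = inner_d d beta_star (X \<omega>) + eps \<omega>"
    and noise: "AE \<omega> in M. real_cond_exp M (gen_sigma M d X) eps \<omega> = 0"
    and rho_pos: "0 < rho" and rho_L: "rho \<le> L"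
    and eig: "\<And>F mu. F \<subseteq> {..<d} \<Longrightarrow> card F = card (supp beta_star) \<Longrightarrow>
               sub_eigenvalue (covx M X) F mu \<Longrightarrow> rho \<le> mu \<and> mu \<le> L"
    and incoh: "\<And>F. F \<subseteq> {..<d} \<Longrightarrow> card F = card (supp beta_star) \<Longrightarrow>
               mu_F d (covx M X) F < 1"
    and y_bdd: "AE \<omega> in M. \<bar>Y \<omega>\<bar> < 1"
    and x_bdd: "AE \<omega> in M. \<forall>i<d. \<bar>X \<omega> i\<bar> < Mx"
    and S_sub: "S \<subset> supp beta_star"
  shows "Max ((\<lambda>i. \<bar>Zs M d X Y S i\<bar>) ` ({..<d} - S))
           \<ge> sqrt (rho ^ 3 / L) * (1 / sqrt (real (card (supp beta_star)) - real (card S)))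
               * norm2_on {..<d} (\<lambda>i. beta_star i - betaS M d X Y S i)
       \<and> sqrt (rho ^ 3 / L) * (1 / sqrt (real (card (supp beta_star)) - real (card S)))
               * norm2_on {..<d} (\<lambda>i. beta_star i - betaS M d X Y S i)
           \<ge> sqrt (rho ^ 3 / L) * (1 / sqrt (real (card (supp beta_star)) - real (card S)))
               * norm2_on (supp beta_star - S) beta_star"
proof -
  interpret sparse_regression M d X Y eps beta_star Mx rho
    using prob X_meas Y_meas beta_dim mean0 model noise y_bdd x_bdd rho_pos
      eig[OF supp_subset_lessThan[OF beta_dim]]
    by (intro sparse_regression.intro sparse_regression_axioms.intro) auto
  define k where "k = real (card (supp beta_star)) - real (card S)"
  have "0 < k"
    using S_sub psubset_card_mono[OF finite_subset[OF supp_beta_star_subset]] by (simp add: k_def)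
  have "sqrt (rho ^ 3 / L) \<le> sqrt (rho\<^sup>2)"
    using rho_pos rho_L by (intro real_sqrt_le_mono) (simp add: divide_le_eq power3_eq_cube power2_eq_square)
  then have coeff: "sqrt (rho ^ 3 / L) * (1 / sqrt k) \<le> rho / sqrt k"
    using rho_pos \<open>0 < k\<close> by (simp add: divide_right_mono)
  have "sqrt (rho ^ 3 / L) * (1 / sqrt k) * norm2_on {..<d} (\<lambda>i. beta_star i - betaS M d X Y S i)
      \<le> rho * norm2_on {..<d} (\<lambda>i. beta_star i - betaS M d X Y S i) / sqrt k"
    using mult_right_mono[OF coeff L2_set_nonneg] by (simp add: norm2_on_eq_L2_set)
  also have "\<dots> \<le> Max ((\<lambda>i. \<bar>Zs M d X Y S i\<bar>) ` ({..<d} - S))"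
    using Max_abs_Zs_ge[OF S_sub] \<open>0 < k\<close> by (simp add: k_def divide_le_eq mult.commute)
  finally have "sqrt (rho ^ 3 / L) * (1 / sqrt k) * norm2_on {..<d} (\<lambda>i. beta_star i - betaS M d X Y S i)
      \<le> Max ((\<lambda>i. \<bar>Zs M d X Y S i\<bar>) ` ({..<d} - S))" .
  moreover have "sqrt (rho ^ 3 / L) * (1 / sqrt k) * norm2_on (supp beta_star - S) beta_star
      \<le> sqrt (rho ^ 3 / L) * (1 / sqrt k) * norm2_on {..<d} (\<lambda>i. beta_star i - betaS M d X Y S i)"
    using S_sub \<open>0 < k\<close> rho_pos rho_L by (intro mult_left_mono norm2_on_le_norm2_diff_betaS) auto
  ultimately show ?thesis
    by (simp add: k_def)
qed

end
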